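(* Let $p$ be a prime, $q$ a power of $p$, and $F$ a field of characteristic $p$ containing $\mathbb{F}_q$. Let $L\in F[x]$ be a monic $q$-polynomial of $q$-degree $n\ge1$ whose coefficient of $x$ equals $(-1)^n$, let $E$ be its splitting field over $F$, and let $G=\mathrm{Gal}(E/F)$, regarded as a subgroup of $GL(n,q)$ via its linear action on the $\mathbb{F}_q$-space of roots of $L$. Then $\det\sigma=1$ for all $\sigma\in G$; thus $G$ is a subgroup of $SL(n,q)$.
   Context: A $q$-polynomial over $F$ is a polynomial $\sum_{i=0}^n a_i x^{q^i}\in F[x]$; with $a_n\ne0$ its $q$-degree is $n$. When the coefficient of $x$ is nonzero, the roots of $L$ in $E$ are distinct and form an $n$-dimensional $\mathbb{F}_q$-vector space on which $G$ acts $\mathbb{F}_q$-linearly. *)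

theory Defs
  imports "HOL-Computational_Algebra.Polynomial" "Jordan_Normal_Form.Determinant"
begin

definition is_subfield :: "'a::field set \<Rightarrow> bool" where
  "is_subfield K \<longleftrightarrow> 0 \<in> K \<and> 1 \<in> K \<and>
     (\<forall>x\<in>K. \<forall>y\<in>K. x + y \<in> K \<and> x - y \<in> K \<and> x * y \<in> K) \<and>
     (\<forall>x\<in>K. x \<noteq> 0 \<longrightarrow> inverse x \<in> K)"

definition gen_field :: "'a::field set \<Rightarrow> 'a set" where
  "gen_field S = \<Inter> {K. is_subfield K \<and> S \<subseteq> K}"

definition qpoly :: "(nat \<Rightarrow> 'a::comm_ring_1) \<Rightarrow> nat \<Rightarrow> nat \<Rightarrow> 'a poly" where
  "qpoly a q n = (\<Sum>i\<le>n. monom (a i) (q ^ i))"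

definition splits :: "'a::field poly \<Rightarrow> bool" where
  "splits P \<longleftrightarrow> (\<exists>rs. P = prod_list (map (\<lambda>r. [:- r, 1:]) rs))"

text \<open>Gal(E/F): field automorphisms of E fixing F pointwise (only their values on E matter).\<close>
definition galois_group :: "'a::field set \<Rightarrow> 'a set \<Rightarrow> ('a \<Rightarrow> 'a) set" where
  "galois_group E F = {\<sigma>. bij_betw \<sigma> E E \<and>
      (\<forall>x\<in>E. \<forall>y\<in>E. \<sigma> (x + y) = \<sigma> x + \<sigma> y \<and> \<sigma> (x * y) = \<sigma> x * \<sigma> y) \<and>
      (\<forall>x\<in>F. \<sigma> x = x)}"

definition Fq :: "nat \<Rightarrow> 'a::field set" where
  "Fq q = {x. x ^ q = x}"

definition is_Fq_basis :: "nat \<Rightarrow> 'a::field set \<Rightarrow> 'a list \<Rightarrow> bool" where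
  "is_Fq_basis q V bs \<longleftrightarrow> set bs \<subseteq> V \<and>
     (\<forall>c. (\<forall>i<length bs. c i \<in> Fq q) \<longrightarrow> (\<Sum>i<length bs. c i * bs ! i) = 0 \<longrightarrow> (\<forall>i<length bs. c i = 0)) \<and>
     (\<forall>v\<in>V. \<exists>c. (\<forall>i<length bs. c i \<in> Fq q) \<and> v = (\<Sum>i<length bs. c i * bs ! i))"

definition is_matrix_wrt :: "nat \<Rightarrow> 'a::field list \<Rightarrow> ('a \<Rightarrow> 'a) \<Rightarrow> 'a mat \<Rightarrow> bool" where
  "is_matrix_wrt q bs \<sigma> M \<longleftrightarrow> M \<in> carrier_mat (length bs) (length bs) \<and>
     (\<forall>i<length bs. \<forall>j<length bs. M $$ (i, j) \<in> Fq q) \<and>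
     (\<forall>j<length bs. \<sigma> (bs ! j) = (\<Sum>i<length bs. M $$ (i, j) * bs ! i))"

end

theory Submission
  imports Defs
begin

(* Let A = (b_j^(q^i)) be the Moore matrix of an F_q-basis b_1, ..., b_n of the roots of L.
   Raising all entries to the q-th power shifts the rows up, and L(b_j) = 0 rewrites the new
   last row, so A^(q) = C A for the companion matrix C of L, with det C = (-1)^n a_0 = 1.
   Hence det A is a root of x^q - x, i.e. lies in F_q and so in F, and is fixed by every
   automorphism sigma.  On the other hand sigma maps A to A M, M the matrix of sigma, so
   det A = det A * det M.  Finally det A is nonzero: otherwise a nonzero q-polynomial of
   q-degree < n would vanish on all q^n roots. *)

lemma frobenius_add:
  fixes x y :: "'a::comm_ring_1"
  assumes "prime CHAR('a)" "q = CHAR('a) ^ k"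
  shows "(x + y) ^ (q ^ i) = x ^ (q ^ i) + y ^ (q ^ i)"
  using assms by (intro freshmans_dream'[where n = "k * i"]) (simp_all add: power_mult)

lemma frobenius_sum:
  fixes f :: "'b \<Rightarrow> 'a::comm_ring_1"
  assumes "prime CHAR('a)" "q = CHAR('a) ^ k"
  shows "sum f S ^ (q ^ i) = (\<Sum>x\<in>S. f x ^ (q ^ i))"
  using assms by (intro freshmans_dream_sum'[where n = "k * i"]) (simp_all add: power_mult)

lemma frobenius_diff:
  fixes x y :: "'a::comm_ring_1"
  assumes "prime CHAR('a)" "q = CHAR('a) ^ k"
  shows "(x - y) ^ (q ^ i) = x ^ (q ^ i) - y ^ (q ^ i)"
  using frobenius_add[OF assms, of "x - y" y i] by (simp add: algebra_simps)

lemma char_power_ge_2: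
  assumes "prime CHAR('a::comm_ring_1)" "k \<ge> 1"
  shows "CHAR('a) ^ k \<ge> 2"
proof -
  have "2 \<le> CHAR('a)"
    using prime_ge_2_nat[OF assms(1)] .
  also have "CHAR('a) \<le> CHAR('a) ^ k"
    using power_increasing[of 1 k "CHAR('a)"] prime_gt_0_nat[OF assms(1)] assms(2) by simp
  finally show ?thesis .
qed

lemma Fq_power: "c \<in> Fq q \<Longrightarrow> c ^ (q ^ i) = c"
  by (induction i) (simp_all add: Fq_def power_mult mult.commute)

lemma Fq_diff:
  fixes x y :: "'a::field"
  assumes "prime CHAR('a)" "q = CHAR('a) ^ k" "x \<in> Fq q" "y \<in> Fq q"
  shows "x - y \<in> Fq q"
  using frobenius_diff[OF assms(1,2), of x y 1] assms(3,4) by (simp add: Fq_def)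

definition Fq_poly :: "nat \<Rightarrow> 'a::comm_ring_1 poly" where
  "Fq_poly q = monom 1 q - monom 1 1"

lemma roots_Fq_poly: "{x. poly (Fq_poly q) x = 0} = Fq q"
  by (auto simp: Fq_poly_def poly_monom Fq_def)

lemma degree_Fq_poly:
  assumes "q \<ge> 2"
  shows "degree (Fq_poly q :: 'a::comm_ring_1 poly) = q"
  unfolding Fq_poly_def
proof (rule antisym)
  show "degree (monom 1 q - monom 1 1 :: 'a poly) \<le> q"
    using assms by (intro degree_diff_le) (auto intro: order_trans[OF degree_monom_le])
  show "q \<le> degree (monom 1 q - monom 1 1 :: 'a poly)"
    using assms by (intro le_degree) simp
qed

lemma Fq_poly_dvd_power:
  assumes "prime CHAR('a::comm_ring_1)" "q = CHAR('a) ^ k"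
  shows "Fq_poly q dvd (Fq_poly (q ^ i) :: 'a poly)"
  unfolding Fq_poly_def
proof (induction i)
  case (Suc i)
  have "prime CHAR('a poly)" "q = CHAR('a poly) ^ k"
    using assms by simp_all
  then have "(monom (1::'a) (q ^ i) - monom 1 1) ^ q = monom 1 (q ^ i) ^ q - monom 1 1 ^ q"
    using frobenius_diff[of q k "monom (1::'a) (q ^ i)" "monom 1 1" 1] by simp
  also have "\<dots> = monom 1 (q ^ Suc i) - monom 1 q"
    by (simp add: monom_power mult.commute)
  finally have split: "monom (1::'a) (q ^ Suc i) - monom 1 1 =
      (monom 1 (q ^ i) - monom 1 1) ^ q + (monom 1 q - monom 1 1)"
    by simp
  have "q \<noteq> 0"
    using assms(2) prime_gt_0_nat[OF assms(1)] by simp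
  then have "(monom (1::'a) (q ^ i) - monom 1 1) dvd (monom 1 (q ^ i) - monom 1 1) ^ q"
    by (intro dvd_power) simp
  with Suc.IH have "(monom (1::'a) q - monom 1 1) dvd (monom 1 (q ^ i) - monom 1 1) ^ q"
    by (rule dvd_trans)
  then show ?case
    unfolding split by (rule dvd_add[OF _ dvd_refl])
qed simp

lemma poly_qpoly: "poly (qpoly a q n) x = (\<Sum>i\<le>n. a i * x ^ (q ^ i))"
  by (simp add: qpoly_def poly_sum poly_monom)

lemma coeff_qpoly_power:
  assumes "q \<ge> 2" "i \<le> n"
  shows "coeff (qpoly a q n) (q ^ i) = a i"
proof -
  have "coeff (qpoly a q n) (q ^ i) = (\<Sum>j\<le>n. if j = i then a j else 0)"
    unfolding qpoly_def coeff_sum coeff_monom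
    using assms by (intro sum.cong) (auto simp: power_inject_exp)
  then show ?thesis
    using assms by simp
qed

lemma qpoly_eq_0_iff:
  assumes "q \<ge> 2"
  shows "qpoly a q n = 0 \<longleftrightarrow> (\<forall>i\<le>n. a i = 0)"
proof
  show "qpoly a q n = 0 \<Longrightarrow> \<forall>i\<le>n. a i = 0"
    using coeff_qpoly_power[OF assms] by (metis coeff_0)
qed (simp add: qpoly_def)

lemma degree_qpoly_le:
  assumes "q \<ge> 1"
  shows "degree (qpoly a q n) \<le> q ^ n"
  unfolding qpoly_def
proof (rule degree_sum_le)
  fix i assume "i \<in> {..n}"
  then have "q ^ i \<le> q ^ n"
    using assms by (simp add: power_increasing)
  then show "degree (monom (a i) (q ^ i)) \<le> q ^ n"
    by (meson degree_monom_le order_trans)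
qed simp

lemma degree_qpoly:
  assumes "q \<ge> 2" "a n \<noteq> 0"
  shows "degree (qpoly a q n) = q ^ n"
  using degree_qpoly_le[of q a n] le_degree[of "qpoly a q n" "q ^ n"] coeff_qpoly_power[of q n n a] assms
  by simp

lemma pderiv_qpoly:
  assumes "prime CHAR('a::idom)" "q = CHAR('a) ^ k" "k \<ge> 1"
  shows "pderiv (qpoly (a :: nat \<Rightarrow> 'a) q n) = [:a 0:]"
proof (induction n)
  case (Suc n)
  have "CHAR('a) dvd q ^ Suc n"
    using assms by (simp add: dvd_power)
  then have "(of_nat (q ^ Suc n) :: 'a) = 0"
    by (simp only: of_nat_eq_0_iff_char_dvd)
  moreover have "qpoly a q (Suc n) = qpoly a q n + monom (a (Suc n)) (q ^ Suc n)"
    by (simp add: qpoly_def)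
  ultimately show ?case
    using Suc by (simp add: pderiv_add pderiv_monom)
qed (simp add: qpoly_def pderiv_monom monom_0)

lemma poly_qpoly_Fq_linear:
  fixes c :: "'b \<Rightarrow> 'a::field"
  assumes "prime CHAR('a)" "q = CHAR('a) ^ k" "\<forall>j\<in>J. c j \<in> Fq q"
  shows "poly (qpoly a q n) (\<Sum>j\<in>J. c j * b j) = (\<Sum>j\<in>J. c j * poly (qpoly a q n) (b j))"
proof -
  have "(\<Sum>j\<in>J. c j * b j) ^ (q ^ i) = (\<Sum>j\<in>J. c j * b j ^ (q ^ i))" for i
    unfolding frobenius_sum[OF assms(1,2)] using assms(3)
    by (intro sum.cong) (auto simp: power_mult_distrib Fq_power)
  then have "poly (qpoly a q n) (\<Sum>j\<in>J. c j * b j) = (\<Sum>i\<le>n. \<Sum>j\<in>J. c j * (a i * b j ^ (q ^ i)))"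
    unfolding poly_qpoly by (simp add: sum_distrib_left mult.left_commute)
  also have "\<dots> = (\<Sum>j\<in>J. c j * poly (qpoly a q n) (b j))"
    unfolding poly_qpoly by (subst sum.swap) (simp add: sum_distrib_left)
  finally show ?thesis .
qed

lemma poly_qpoly_scaled:
  "poly (qpoly (\<lambda>i. a i * v ^ (q ^ i)) q n) x = poly (qpoly a q n) (v * x)"
  by (simp add: poly_qpoly power_mult_distrib mult.assoc)

lemma Fq_poly_dvd_qpoly:
  assumes "prime CHAR('a::comm_ring_1)" "q = CHAR('a) ^ k" "(\<Sum>i\<le>n. a i) = (0 :: 'a)"
  shows "Fq_poly q dvd qpoly a q n"
proof -
  have "Fq_poly q dvd (\<Sum>i\<le>n. smult (a i) (Fq_poly (q ^ i)))"
    by (intro dvd_sum dvd_smult Fq_poly_dvd_power[OF assms(1,2)])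
  also have "(\<Sum>i\<le>n. smult (a i) (Fq_poly (q ^ i))) = qpoly a q n - monom (\<Sum>i\<le>n. a i) 1"
    by (simp add: Fq_poly_def qpoly_def smult_diff_right smult_monom sum_subtractf monom_sum)
  finally show ?thesis
    using assms(3) by simp
qed

lemma poly_prod_linear_factors_eq_0_iff:
  "poly (\<Prod>r\<leftarrow>rs. [:- r, 1:]) x = 0 \<longleftrightarrow> x \<in> set (rs :: 'a::idom list)"
  by (induction rs) auto

lemma degree_prod_linear_factors: "degree (\<Prod>r\<leftarrow>rs. [:- r, 1:] :: 'a::idom poly) = length rs"
proof (induction rs)
  case (Cons s rs)
  have "(\<Prod>r\<leftarrow>rs. [:- r, 1:] :: 'a poly) \<noteq> 0"
    by (auto simp: prod_list_zero_iff)
  then show ?case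
    using Cons.IH by (simp add: degree_mult_eq del: mult_pCons_left)
qed simp

lemma not_distinct_multiple_root:
  fixes rs :: "'a::idom list"
  assumes "\<not> distinct rs"
  shows "\<exists>r. poly (\<Prod>r\<leftarrow>rs. [:- r, 1:]) r = 0 \<and> poly (pderiv (\<Prod>r\<leftarrow>rs. [:- r, 1:])) r = 0"
  using assms
proof (induction rs)
  case (Cons s rs)
  then consider "s \<in> set rs" | r where "poly (\<Prod>r\<leftarrow>rs. [:- r, 1:]) r = 0"
    "poly (pderiv (\<Prod>r\<leftarrow>rs. [:- r, 1:])) r = 0"
    by auto
  then show ?case
  proof cases
    case 1
    then show ?thesis
      by (intro exI[of _ s])
        (simp add: pderiv_mult poly_prod_linear_factors_eq_0_iff del: mult_pCons_left)
  next
    case 2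
    then show ?thesis
      by (intro exI[of _ r]) (simp add: pderiv_mult del: mult_pCons_left)
  qed
qed simp

lemma card_roots_separable_splits:
  fixes P :: "'a::field poly"
  assumes "splits P" "\<And>x. poly P x = 0 \<Longrightarrow> poly (pderiv P) x \<noteq> 0"
  shows "card {x. poly P x = 0} = degree P"
proof -
  obtain rs where P: "P = (\<Prod>r\<leftarrow>rs. [:- r, 1:])"
    using assms(1) unfolding splits_def by blast
  have "distinct rs"
  proof (rule ccontr)
    assume "\<not> distinct rs"
    then obtain r where "poly P r = 0" "poly (pderiv P) r = 0"
      unfolding P by (blast dest: not_distinct_multiple_root)
    with assms(2) show False
      by simp
  qed
  then show ?thesis
    by (simp add: P poly_prod_linear_factors_eq_0_iff degree_prod_linear_factors distinct_card)
qed

lemma card_roots_dvd: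
  fixes D Q :: "'a::idom poly"
  assumes "D dvd Q" "Q \<noteq> 0" "card {x. poly Q x = 0} = degree Q"
  shows "card {x. poly D x = 0} = degree D"
proof -
  obtain R where Q: "Q = D * R"
    using assms(1) by (elim dvdE)
  then have "D \<noteq> 0" "R \<noteq> 0"
    using assms(2) by auto
  have "degree D + degree R = card {x. poly Q x = 0}"
    using assms(3) degree_mult_eq[OF \<open>D \<noteq> 0\<close> \<open>R \<noteq> 0\<close>] Q by simp
  also have "{x. poly Q x = 0} = {x. poly D x = 0} \<union> {x. poly R x = 0}"
    by (auto simp: Q)
  also have "card \<dots> \<le> card {x. poly D x = 0} + card {x. poly R x = 0}"
    by (rule card_Un_le)
  also have "\<dots> \<le> card {x. poly D x = 0} + degree R"
    using card_poly_roots_bound[OF \<open>R \<noteq> 0\<close>] by simp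
  finally show ?thesis
    using card_poly_roots_bound[OF \<open>D \<noteq> 0\<close>] by linarith
qed

lemma card_roots_qpoly:
  assumes "prime CHAR('a::field)" "q = CHAR('a) ^ k" "k \<ge> 1"
    and "a n \<noteq> 0" "a 0 \<noteq> (0 :: 'a)" "splits (qpoly a q n)"
  shows "card {x. poly (qpoly a q n) x = 0} = q ^ n"
proof -
  have "q \<ge> 2"
    using assms(2,3) char_power_ge_2[OF assms(1)] by simp
  have "card {x. poly (qpoly a q n) x = 0} = degree (qpoly a q n)"
    using assms(6) pderiv_qpoly[OF assms(1-3), of a n] assms(5)
    by (intro card_roots_separable_splits) simp_all
  also have "\<dots> = q ^ n"
    using \<open>q \<ge> 2\<close> assms(4) by (simp add: degree_qpoly)
  finally show ?thesis .
qed

definition Fq_span :: "nat \<Rightarrow> 'a::field list \<Rightarrow> 'a set" where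
  "Fq_span q bs = {\<Sum>i<length bs. c i * bs ! i | c. \<forall>i<length bs. c i \<in> Fq q}"

definition Fq_independent :: "nat \<Rightarrow> 'a::field list \<Rightarrow> bool" where
  "Fq_independent q bs \<longleftrightarrow> (\<forall>c. (\<forall>i<length bs. c i \<in> Fq q) \<longrightarrow>
     (\<Sum>i<length bs. c i * bs ! i) = 0 \<longrightarrow> (\<forall>i<length bs. c i = 0))"

lemma Fq_independentD:
  assumes "Fq_independent q bs" "\<forall>i<length bs. c i \<in> Fq q" "(\<Sum>i<length bs. c i * bs ! i) = 0"
    and "i < length bs"
  shows "c i = 0"
  using assms unfolding Fq_independent_def by blast

lemma is_Fq_basisD:
  assumes "is_Fq_basis q V bs"
  shows "set bs \<subseteq> V" "Fq_independent q bs" "V \<subseteq> Fq_span q bs"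
  using assms unfolding is_Fq_basis_def Fq_independent_def Fq_span_def by auto

lemma Fq_span_eq_image_PiE:
  "Fq_span q bs = (\<lambda>c. \<Sum>i<length bs. c i * bs ! i) ` PiE {..<length bs} (\<lambda>_. Fq q)"
proof (intro equalityI subsetI)
  fix x assume "x \<in> Fq_span q bs"
  then obtain c where c: "\<forall>i<length bs. c i \<in> Fq q" "x = (\<Sum>i<length bs. c i * bs ! i)"
    unfolding Fq_span_def by blast
  then have "restrict c {..<length bs} \<in> PiE {..<length bs} (\<lambda>_. Fq q)"
    "x = (\<Sum>i<length bs. restrict c {..<length bs} i * bs ! i)"
    by auto
  then show "x \<in> (\<lambda>c. \<Sum>i<length bs. c i * bs ! i) ` PiE {..<length bs} (\<lambda>_. Fq q)"
    by blast
qed (auto simp: Fq_span_def PiE_iff)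

lemma card_Fq_span:
  assumes "prime CHAR('a::field)" "q = CHAR('a) ^ k" "finite (Fq q :: 'a set)"
    and "Fq_independent q (bs :: 'a list)"
  shows "card (Fq_span q bs) = card (Fq q :: 'a set) ^ length bs"
proof -
  let ?m = "length bs"
  have "inj_on (\<lambda>c. \<Sum>i<?m. c i * bs ! i) (PiE {..<?m} (\<lambda>_. Fq q))"
  proof (rule inj_onI)
    fix c d
    assume c: "c \<in> PiE {..<?m} (\<lambda>_. Fq q)" and d: "d \<in> PiE {..<?m} (\<lambda>_. Fq q)"
      and eq: "(\<Sum>i<?m. c i * bs ! i) = (\<Sum>i<?m. d i * bs ! i)"
    have diff: "\<forall>i<?m. c i - d i \<in> Fq q"
      using c d Fq_diff[OF assms(1,2)] by (auto simp: PiE_iff)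
    have "(\<Sum>i<?m. (c i - d i) * bs ! i) = 0"
      using eq by (simp add: left_diff_distrib sum_subtractf)
    note Fq_independentD[OF assms(4) diff this]
    then show "c = d"
      using c d by (intro PiE_ext) auto
  qed
  then show ?thesis
    unfolding Fq_span_eq_image_PiE by (simp add: card_image card_PiE)
qed

lemma Fq_span_subset_roots_qpoly:
  assumes "prime CHAR('a::field)" "q = CHAR('a) ^ k"
    and "\<forall>b\<in>set bs. poly (qpoly a q n) b = (0 :: 'a)"
  shows "Fq_span q bs \<subseteq> {x. poly (qpoly a q n) x = 0}"
  using assms by (auto simp: Fq_span_def poly_qpoly_Fq_linear)

(* Fq q is defined only as the set of roots of x^q - x; its size comes from L.  For a nonzero
   root v the coefficients of L(v x) sum to L(v) = 0, so x^q - x divides L(v x), and a divisor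
   of a polynomial with as many distinct roots as its degree inherits this property. *)
lemma card_Fq:
  assumes "prime CHAR('a::field)" "q = CHAR('a) ^ k" "k \<ge> 1"
    and "n \<ge> 1" "a n \<noteq> 0" "card {x. poly (qpoly a q n) x = (0 :: 'a)} = q ^ n"
  shows "card (Fq q :: 'a set) = q"
proof -
  have q: "q \<ge> 2"
    using assms(2,3) char_power_ge_2[OF assms(1)] by simp
  have "\<not> {x. poly (qpoly a q n) x = 0} \<subseteq> {0}"
  proof
    assume "{x. poly (qpoly a q n) x = 0} \<subseteq> {0}"
    then have "q ^ n \<le> 1"
      using card_mono[of "{0}" "{x. poly (qpoly a q n) x = 0}"] assms(6) by simp
    moreover have "q \<le> q ^ n"
      using q assms(4) by (simp add: self_le_power)
    ultimately show False
      using q by simp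
  qed
  then obtain v where v: "v \<noteq> 0" "poly (qpoly a q n) v = 0"
    by blast
  define Q where "Q = qpoly (\<lambda>i. a i * v ^ (q ^ i)) q n"
  have "{x. poly Q x = 0} = (\<lambda>w. w / v) ` {x. poly (qpoly a q n) x = 0}"
    using v(1) by (auto simp: Q_def poly_qpoly_scaled image_iff) (metis nonzero_mult_div_cancel_left)
  then have card_Q: "card {x. poly Q x = 0} = q ^ n"
    using v(1) assms(6) by (simp add: card_image inj_on_def)
  have degree_Q: "degree Q = q ^ n"
    using assms(5) v(1) q by (simp add: Q_def degree_qpoly)
  then have "Q \<noteq> 0"
    using q by (intro notI) simp
  have "Fq_poly q dvd Q"
    unfolding Q_def using v(2) by (intro Fq_poly_dvd_qpoly[OF assms(1,2)]) (simp add: poly_qpoly)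
  then have "card {x. poly (Fq_poly q :: 'a poly) x = 0} = degree (Fq_poly q :: 'a poly)"
    using \<open>Q \<noteq> 0\<close> by (rule card_roots_dvd) (simp add: card_Q degree_Q)
  then show ?thesis
    unfolding roots_Fq_poly degree_Fq_poly[OF q] .
qed

lemma length_Fq_basis_roots_qpoly:
  assumes "prime CHAR('a::field)" "q = CHAR('a) ^ k" "k \<ge> 1"
    and "is_Fq_basis q {x. poly (qpoly a q n) x = (0 :: 'a)} bs"
    and "card {x. poly (qpoly a q n) x = 0} = q ^ n" "card (Fq q :: 'a set) = q"
  shows "length bs = n"
proof -
  have q: "q \<ge> 2"
    using assms(2,3) char_power_ge_2[OF assms(1)] by simp
  have "finite (Fq q :: 'a set)"
    using assms(6) q by (intro card_ge_0_finite) simp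
  then have "q ^ length bs = card (Fq_span q bs)"
    using card_Fq_span[OF assms(1,2)] is_Fq_basisD(2)[OF assms(4)] assms(6) by simp
  also have "Fq_span q bs = {x. poly (qpoly a q n) x = 0}"
    using is_Fq_basisD[OF assms(4)] Fq_span_subset_roots_qpoly[OF assms(1,2)] by blast
  finally have "q ^ length bs = q ^ n"
    using assms(5) by simp
  then show ?thesis
    using q by (simp add: power_inject_exp)
qed

lemma is_subfield_UNIV: "is_subfield UNIV"
  by (simp add: is_subfield_def)

lemma is_subfield_gen_field: "is_subfield (gen_field S)"
  unfolding is_subfield_def gen_field_def by (auto simp: Ball_def)

lemma subset_gen_field: "S \<subseteq> gen_field S"
  unfolding gen_field_def by blast

lemma is_subfield_power: "is_subfield E \<Longrightarrow> x \<in> E \<Longrightarrow> x ^ e \<in> E"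
  by (induction e) (simp_all add: is_subfield_def)

lemma hom_on_sum:
  fixes h :: "'a::field \<Rightarrow> 'a"
  assumes "is_subfield E" "\<forall>x\<in>E. \<forall>y\<in>E. h (x + y) = h x + h y"
    and "finite S" "\<forall>x\<in>S. f x \<in> E"
  shows "sum f S \<in> E \<and> h (sum f S) = (\<Sum>x\<in>S. h (f x))"
proof -
  have "0 \<in> E"
    using assms(1) by (simp add: is_subfield_def)
  then have "h (0 + 0) = h 0 + h 0"
    using assms(2) by blast
  then have "h 0 = 0"
    by (simp only: add_0 add_cancel_right_right)
  with assms(3,4) show ?thesis
    by (induction S rule: finite_induct) (use assms(1,2) \<open>0 \<in> E\<close> in \<open>simp_all add: is_subfield_def\<close>)
qed

lemma hom_on_prod:
  fixes h :: "'a::field \<Rightarrow> 'a"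
  assumes "is_subfield E" "\<forall>x\<in>E. \<forall>y\<in>E. h (x * y) = h x * h y" "h 1 = 1"
    and "finite S" "\<forall>x\<in>S. f x \<in> E"
  shows "prod f S \<in> E \<and> h (prod f S) = (\<Prod>x\<in>S. h (f x))"
  using assms(4,5) by (induction S rule: finite_induct) (use assms(1-3) in \<open>simp_all add: is_subfield_def\<close>)

lemma det_map_mat_on:
  fixes A :: "'a::field mat" and h :: "'a \<Rightarrow> 'a"
  assumes E: "is_subfield E" and A: "A \<in> carrier_mat n n" "\<forall>i<n. \<forall>j<n. A $$ (i, j) \<in> E"
    and add: "\<forall>x\<in>E. \<forall>y\<in>E. h (x + y) = h x + h y"
    and mult: "\<forall>x\<in>E. \<forall>y\<in>E. h (x * y) = h x * h y" and one: "h 1 = 1"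
  shows "det (map_mat h A) = h (det A)"
proof -
  have "0 \<in> E" "1 \<in> E" "-1 \<in> E"
    using E unfolding is_subfield_def by (metis diff_0)+
  then have "h 0 = h 0 + h 0" "h 0 = h 1 + h (-1)"
    using add by (metis add_0, metis add.right_inverse)
  then have "h (-1) = -1"
    using one by (simp add: eq_neg_iff_add_eq_0 add.commute)
  then have sign: "of_int (sign p) \<in> E \<and> h (of_int (sign p)) = of_int (sign p)" for p :: "nat \<Rightarrow> nat"
    using \<open>1 \<in> E\<close> \<open>-1 \<in> E\<close> one by (simp add: sign_def)
  have "(\<Prod>i = 0..<n. A $$ (i, p i)) \<in> E \<and>
      h (\<Prod>i = 0..<n. A $$ (i, p i)) = (\<Prod>i = 0..<n. h (A $$ (i, p i)))"
    if "p permutes {0..<n}" for p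
    using A(2) that by (intro hom_on_prod[OF E mult one]) (simp_all add: permutes_in_image)
  then have summand: "of_int (sign p) * (\<Prod>i = 0..<n. A $$ (i, p i)) \<in> E \<and>
      h (of_int (sign p) * (\<Prod>i = 0..<n. A $$ (i, p i))) = of_int (sign p) * (\<Prod>i = 0..<n. h (A $$ (i, p i)))"
    if "p permutes {0..<n}" for p
    using that sign[of p] mult E unfolding is_subfield_def by simp
  have "h (det A) = (\<Sum>p | p permutes {0..<n}. h (of_int (sign p) * (\<Prod>i = 0..<n. A $$ (i, p i))))"
    unfolding det_def'[OF A(1)] using summand
    by (intro conjunct2[OF hom_on_sum[OF E add]]) (simp_all add: finite_permutations)
  also have "\<dots> = det (map_mat h A)"
    unfolding det_def'[OF map_carrier_mat[THEN iffD2, OF A(1)]] using A(1) summand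
    by (intro sum.cong) (auto simp: permutes_in_image)
  finally show ?thesis
    by simp
qed

definition moore_mat :: "nat \<Rightarrow> 'a::comm_ring_1 list \<Rightarrow> 'a mat" where
  "moore_mat q bs = mat (length bs) (length bs) (\<lambda>(i, j). bs ! j ^ (q ^ i))"

lemma moore_mat_carrier: "moore_mat q bs \<in> carrier_mat (length bs) (length bs)"
  by (simp add: moore_mat_def)

definition companion_mat :: "(nat \<Rightarrow> 'a::comm_ring_1) \<Rightarrow> nat \<Rightarrow> 'a mat" where
  "companion_mat a n = mat n n (\<lambda>(i, j). if i < n - 1 then (if j = i + 1 then 1 else 0) else - a j)"

lemma det_companion_mat:
  assumes "n \<ge> 1"
  shows "det (companion_mat a n) = (-1) ^ n * a 0"
proof -
  obtain m where n: "n = Suc m"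
    using assms by (cases n) auto
  have C: "companion_mat a n \<in> carrier_mat n n"
    by (simp add: companion_mat_def)
  have "det (companion_mat a n) = (\<Sum>i<n. companion_mat a n $$ (i, 0) * cofactor (companion_mat a n) i 0)"
    using laplace_expansion_column[OF C, of 0] n by simp
  also have "\<dots> = companion_mat a n $$ (m, 0) * cofactor (companion_mat a n) m 0"
    unfolding n lessThan_Suc by (simp add: companion_mat_def n)
  also have "mat_delete (companion_mat a n) m 0 = 1\<^sub>m m"
    by (rule eq_matI) (auto simp: mat_delete_def companion_mat_def n)
  then have "cofactor (companion_mat a n) m 0 = (-1) ^ m"
    by (simp add: cofactor_def)
  finally show ?thesis
    by (simp add: companion_mat_def n)
qed

lemma moore_mat_frobenius:
  assumes "length bs = n" "a n = 1" "\<forall>b\<in>set bs. poly (qpoly a q n) b = 0"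
  shows "map_mat (\<lambda>x. x ^ q) (moore_mat q bs) = companion_mat a n * moore_mat q bs"
proof (rule eq_matI)
  fix i j
  assume "i < dim_row (companion_mat a n * moore_mat q bs)" "j < dim_col (companion_mat a n * moore_mat q bs)"
  then have ij: "i < n" "j < n"
    using assms(1) by (simp_all add: companion_mat_def moore_mat_def)
  have "(companion_mat a n * moore_mat q bs) $$ (i, j) = (\<Sum>k<n. companion_mat a n $$ (i, k) * bs ! j ^ (q ^ k))"
    using ij assms(1) by (simp add: companion_mat_def moore_mat_def scalar_prod_def atLeast0LessThan)
  also have "\<dots> = bs ! j ^ (q ^ Suc i)"
  proof (cases "i < n - 1")
    case True
    then have "(\<Sum>k<n. companion_mat a n $$ (i, k) * bs ! j ^ (q ^ k)) =
        (\<Sum>k<n. if k = i + 1 then bs ! j ^ (q ^ k) else 0)"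
      using ij by (intro sum.cong) (auto simp: companion_mat_def)
    then show ?thesis
      using True by simp
  next
    case False
    then have i: "Suc i = n"
      using ij by simp
    have root: "(\<Sum>k<n. a k * bs ! j ^ (q ^ k)) + bs ! j ^ (q ^ n) = 0"
      using assms ij by (simp add: poly_qpoly lessThan_Suc_atMost[symmetric])
    have "(\<Sum>k<n. companion_mat a n $$ (i, k) * bs ! j ^ (q ^ k)) = - (\<Sum>k<n. a k * bs ! j ^ (q ^ k))"
      using False ij by (simp add: companion_mat_def sum_negf)
    also have "\<dots> = bs ! j ^ (q ^ n)"
      using root by (simp add: neg_eq_iff_add_eq_0)
    finally show ?thesis
      using i by simp
  qed
  also have "\<dots> = map_mat (\<lambda>x. x ^ q) (moore_mat q bs) $$ (i, j)"
    using ij assms(1) by (simp add: moore_mat_def power_mult[symmetric] mult.commute)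
  finally show "map_mat (\<lambda>x. x ^ q) (moore_mat q bs) $$ (i, j) = (companion_mat a n * moore_mat q bs) $$ (i, j)"
    by simp
qed (use assms(1) in \<open>simp_all add: companion_mat_def moore_mat_def\<close>)

lemma det_moore_mat_in_Fq:
  fixes a :: "nat \<Rightarrow> 'a::field"
  assumes "prime CHAR('a)" "q = CHAR('a) ^ k"
    and "n \<ge> 1" "a n = 1" "a 0 = (-1) ^ n"
    and "length bs = n" "\<forall>b\<in>set bs. poly (qpoly a q n) b = 0"
  shows "det (moore_mat q bs) \<in> Fq q"
proof -
  have frob: "(x + y) ^ q = x ^ q + y ^ q" for x y :: 'a
    using frobenius_add[OF assms(1,2), of x y 1] by simp
  have "det (moore_mat q bs) ^ q = det (map_mat (\<lambda>x. x ^ q) (moore_mat q bs))"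
    using moore_mat_carrier[of q bs] frob
    by (intro det_map_mat_on[OF is_subfield_UNIV, symmetric]) (auto simp: power_mult_distrib)
  also have "\<dots> = det (companion_mat a n) * det (moore_mat q bs)"
    unfolding moore_mat_frobenius[OF assms(6,4,7)] using assms(6) moore_mat_carrier[of q bs]
    by (intro det_mult) (auto simp: companion_mat_def)
  also have "det (companion_mat a n) = 1"
    using assms(3,5) by (simp add: det_companion_mat flip: power_add)
  finally show ?thesis
    by (simp add: Fq_def)
qed

lemma qpoly_eq_0_if_vanishes_on_Fq_independent:
  fixes bs :: "'a::field list"
  assumes "prime CHAR('a)" "q = CHAR('a) ^ k" "k \<ge> 1"
    and "card (Fq q :: 'a set) = q" "Fq_independent q bs"
    and "d < length bs" "\<forall>b\<in>set bs. poly (qpoly c q d) b = 0"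
  shows "qpoly c q d = 0"
proof (rule ccontr)
  assume "qpoly c q d \<noteq> 0"
  have q: "q \<ge> 2"
    using assms(2,3) char_power_ge_2[OF assms(1)] by simp
  then have "finite (Fq q :: 'a set)"
    using assms(4) by (intro card_ge_0_finite) simp
  then have "q ^ length bs = card (Fq_span q bs)"
    using card_Fq_span[OF assms(1,2) _ assms(5)] assms(4) by simp
  also have "\<dots> \<le> card {x. poly (qpoly c q d) x = 0}"
    using Fq_span_subset_roots_qpoly[OF assms(1,2,7)] poly_roots_finite[OF \<open>qpoly c q d \<noteq> 0\<close>]
    by (rule card_mono[rotated])
  also have "\<dots> \<le> degree (qpoly c q d)"
    by (rule card_poly_roots_bound[OF \<open>qpoly c q d \<noteq> 0\<close>])
  also have "\<dots> \<le> q ^ d"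
    using q by (intro degree_qpoly_le) simp
  also have "\<dots> < q ^ length bs"
    using q assms(6) by (intro power_strict_increasing) auto
  finally show False
    by simp
qed

lemma det_moore_mat_nonzero:
  fixes bs :: "'a::field list"
  assumes "prime CHAR('a)" "q = CHAR('a) ^ k" "k \<ge> 1"
    and "card (Fq q :: 'a set) = q" "Fq_independent q bs"
  shows "det (moore_mat q bs) \<noteq> 0"
proof
  let ?m = "length bs" and ?A = "moore_mat q bs"
  assume "det ?A = 0"
  then have "det (transpose_mat ?A) = 0"
    using det_transpose[OF moore_mat_carrier[of q bs]] by simp
  then obtain v where v: "v \<in> carrier_vec ?m" "v \<noteq> 0\<^sub>v ?m" "transpose_mat ?A *\<^sub>v v = 0\<^sub>v ?m"
    using det_0_iff_vec_prod_zero[of "transpose_mat ?A" ?m] moore_mat_carrier[of q bs] by auto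
  obtain i where i: "i < ?m" "v $ i \<noteq> 0"
    using v(1,2) by (metis eq_vecI carrier_vecD index_zero_vec(1,2))
  have "{..?m - 1} = {..<?m}"
    using i(1) by auto
  have "poly (qpoly (\<lambda>i. v $ i) q (?m - 1)) b = 0" if "b \<in> set bs" for b
  proof -
    obtain j where j: "j < ?m" "b = bs ! j"
      using \<open>b \<in> set bs\<close> by (auto simp: in_set_conv_nth)
    have "poly (qpoly (\<lambda>i. v $ i) q (?m - 1)) b = (\<Sum>i<?m. ?A $$ (i, j) * v $ i)"
      using j \<open>{..?m - 1} = {..<?m}\<close> by (simp add: poly_qpoly moore_mat_def mult.commute)
    also have "\<dots> = (transpose_mat ?A *\<^sub>v v) $ j"
      using j(1) v(1) moore_mat_carrier[of q bs] by (simp add: scalar_prod_def atLeast0LessThan)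
    finally show ?thesis
      using v(3) j(1) by simp
  qed
  then have "qpoly (\<lambda>i. v $ i) q (?m - 1) = 0"
    using i(1) by (intro qpoly_eq_0_if_vanishes_on_Fq_independent[OF assms]) auto
  moreover have "q \<ge> 2"
    using assms(2,3) char_power_ge_2[OF assms(1)] by simp
  ultimately show False
    using i by (simp add: qpoly_eq_0_iff)
qed

lemma galois_groupD:
  assumes "\<sigma> \<in> galois_group E F"
  shows "\<forall>x\<in>E. \<forall>y\<in>E. \<sigma> (x + y) = \<sigma> x + \<sigma> y" "\<forall>x\<in>E. \<forall>y\<in>E. \<sigma> (x * y) = \<sigma> x * \<sigma> y"
    and "\<forall>x\<in>F. \<sigma> x = x"
  using assms unfolding galois_group_def by auto

lemma galois_group_power:
  assumes "\<sigma> \<in> galois_group E F" "is_subfield E" "is_subfield F" "x \<in> E"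
  shows "\<sigma> (x ^ e) = \<sigma> x ^ e"
proof (induction e)
  case 0
  show ?case
    using galois_groupD(3)[OF assms(1)] assms(3) by (simp add: is_subfield_def)
next
  case (Suc e)
  then show ?case
    using galois_groupD(2)[OF assms(1)] assms(4) is_subfield_power[OF assms(2,4), of e] by simp
qed

lemma is_matrix_wrtD:
  assumes "is_matrix_wrt q bs \<sigma> M"
  shows "M \<in> carrier_mat (length bs) (length bs)"
    and "\<forall>i<length bs. \<forall>j<length bs. M $$ (i, j) \<in> Fq q"
    and "\<forall>j<length bs. \<sigma> (bs ! j) = (\<Sum>i<length bs. M $$ (i, j) * bs ! i)"
  using assms unfolding is_matrix_wrt_def by blast+

lemma moore_mat_galois:
  assumes "prime CHAR('a::field)" "q = CHAR('a) ^ k"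
    and "\<sigma> \<in> galois_group E F" "is_subfield E" "is_subfield F"
    and "set bs \<subseteq> E" "is_matrix_wrt q bs \<sigma> (M :: 'a mat)"
  shows "map_mat \<sigma> (moore_mat q bs) = moore_mat q bs * M"
proof (rule eq_matI)
  let ?m = "length bs"
  note M = carrier_matD[OF is_matrix_wrtD(1)[OF assms(7)]] is_matrix_wrtD(2,3)[OF assms(7)]
  fix i j
  assume "i < dim_row (moore_mat q bs * M)" "j < dim_col (moore_mat q bs * M)"
  then have ij: "i < ?m" "j < ?m"
    using M(2) by (simp_all add: moore_mat_def)
  have "(moore_mat q bs * M) $$ (i, j) = (\<Sum>k<?m. bs ! k ^ (q ^ i) * M $$ (k, j))"
    using ij M(1,2) by (simp add: moore_mat_def scalar_prod_def atLeast0LessThan)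
  also have "\<dots> = (\<Sum>k<?m. (M $$ (k, j) * bs ! k) ^ (q ^ i))"
    using ij M(3) by (intro sum.cong) (simp_all add: power_mult_distrib Fq_power mult.commute)
  also have "\<dots> = \<sigma> (bs ! j) ^ (q ^ i)"
    using M(4) ij by (simp add: frobenius_sum[OF assms(1,2)])
  also have "\<dots> = \<sigma> (bs ! j ^ (q ^ i))"
    using assms(6) ij by (intro galois_group_power[OF assms(3-5), symmetric]) auto
  finally show "map_mat \<sigma> (moore_mat q bs) $$ (i, j) = (moore_mat q bs * M) $$ (i, j)"
    using ij by (simp add: moore_mat_def)
qed (use carrier_matD[OF is_matrix_wrtD(1)[OF assms(7)]] in \<open>simp_all add: moore_mat_def\<close>)

lemma det_moore_mat_galois:
  assumes "prime CHAR('a::field)" "q = CHAR('a) ^ k"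
    and "\<sigma> \<in> galois_group E F" "is_subfield E" "is_subfield F"
    and "set bs \<subseteq> E" "is_matrix_wrt q bs \<sigma> (M :: 'a mat)"
  shows "\<sigma> (det (moore_mat q bs)) = det (moore_mat q bs) * det M"
proof -
  have "\<forall>i<length bs. \<forall>j<length bs. moore_mat q bs $$ (i, j) \<in> E"
  proof (intro allI impI)
    fix i j
    assume ij: "i < length bs" "j < length bs"
    then have "bs ! j \<in> E"
      using assms(6) nth_mem by blast
    then show "moore_mat q bs $$ (i, j) \<in> E"
      using ij is_subfield_power[OF assms(4)] by (simp add: moore_mat_def)
  qed
  moreover have "\<sigma> 1 = 1"
    using galois_groupD(3)[OF assms(3)] assms(5) by (simp add: is_subfield_def)
  ultimately have "\<sigma> (det (moore_mat q bs)) = det (map_mat \<sigma> (moore_mat q bs))"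
    using galois_groupD(1,2)[OF assms(3)] moore_mat_carrier[of q bs]
    by (intro det_map_mat_on[OF assms(4), symmetric]) simp_all
  also have "\<dots> = det (moore_mat q bs) * det M"
    unfolding moore_mat_galois[OF assms]
    by (rule det_mult[OF moore_mat_carrier is_matrix_wrtD(1)[OF assms(7)]])
  finally show ?thesis .
qed

theorem corollary2p4:
  fixes p q k n :: nat and F :: "'a::field set" and a :: "nat \<Rightarrow> 'a"
  assumes "prime p" and "k \<ge> 1" and "q = p ^ k"
    and "CHAR('a) = p"
    and "is_subfield F" and "Fq q \<subseteq> F"
    and "n \<ge> 1" and "\<forall>i\<le>n. a i \<in> F" and "a n = 1" and "a 0 = (-1) ^ n"
    and "splits (qpoly a q n)"
  shows "\<forall>\<sigma>\<in>galois_group (gen_field (F \<union> {x. poly (qpoly a q n) x = 0})) F.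
           \<forall>bs M. is_Fq_basis q {x. poly (qpoly a q n) x = 0} bs \<and> is_matrix_wrt q bs \<sigma> M
             \<longrightarrow> det M = 1"
proof (intro ballI allI impI, elim conjE)
  fix \<sigma> and bs :: "'a list" and M :: "'a mat"
  let ?V = "{x. poly (qpoly a q n) x = 0}" and ?A = "moore_mat q bs"
  assume \<sigma>: "\<sigma> \<in> galois_group (gen_field (F \<union> ?V)) F"
    and basis: "is_Fq_basis q ?V bs" and M: "is_matrix_wrt q bs \<sigma> M"
  have char: "prime CHAR('a)" "q = CHAR('a) ^ k"
    using assms(1,3,4) by simp_all
  have "card ?V = q ^ n"
    using card_roots_qpoly[OF char assms(2) _ _ assms(11)] assms(9,10) by simp
  moreover have "card (Fq q :: 'a set) = q"
    using card_Fq[OF char assms(2,7), where a = a] assms(9) \<open>card ?V = q ^ n\<close> by simp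
  ultimately have "length bs = n"
    using length_Fq_basis_roots_qpoly[OF char assms(2) basis] by simp
  have "det ?A \<noteq> 0"
    using det_moore_mat_nonzero[OF char assms(2) \<open>card (Fq q) = q\<close> is_Fq_basisD(2)[OF basis]] .
  have "det ?A \<in> F"
    using det_moore_mat_in_Fq[OF char assms(7,9,10) \<open>length bs = n\<close>] is_Fq_basisD(1)[OF basis] assms(6)
    by blast
  have "set bs \<subseteq> gen_field (F \<union> ?V)"
    using is_Fq_basisD(1)[OF basis] subset_gen_field by blast
  then have "\<sigma> (det ?A) = det ?A * det M"
    by (rule det_moore_mat_galois[OF char \<sigma> is_subfield_gen_field assms(5) _ M])
  moreover have "\<sigma> (det ?A) = det ?A"
    using galois_groupD(3)[OF \<sigma>] \<open>det ?A \<in> F\<close> by blast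
  ultimately show "det M = 1"
    using \<open>det ?A \<noteq> 0\<close> by simp
qed

end
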